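(* Let $I\subseteq V$ with $|I|=5$ such that the induced subgraph $G_I$ is a cycle of length 5. Let $X_I$ be a symmetric matrix indexed by $I$ with $X_I\succeq 0$, $X_I\geq 0$ (entrywise), diagonal entries $x_i$ ($i\in I$), and $X_{i,j}=0$ for every edge $[i,j]$ of $G_I$. Suppose that (i) for every nonempty clique $C_1\subseteq I$ of $G_I$ and every $j\in I\setminus C_1$: $\sum_{i\in C_1}X_{i,j}\leq x_j$; and (ii) for all disjoint nonempty cliques $C_1,C_2\subseteq I$ of $G_I$: $\sum_{i\in C_1\cup C_2}x_i\leq 1+\sum_{i\in C_1,\,j\in C_2}X_{i,j}$. Then $X_I\in\mathrm{STAB}^2(G_I)$ if and only if $$\sum_{i\in I}x_i\leq 1+\sum_{\{i,j\}\in N}X_{i,j},$$ where $N$ is the set of the five unordered pairs of distinct nonadjacent vertices of $G_I$.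
   Context: Let $G$ be a simple graph with vertex set $V=\{1,\dots,n\}$ and edge set $E$; $G_I$ denotes the subgraph induced by $I\subseteq V$. For a graph $H$ with vertex set $I$, let $S(H)=\{s\in\{0,1\}^I: s_is_j=0\ \forall [i,j]\in E(H)\}$ (incidence vectors of stable sets, including the zero vector) and $\mathrm{STAB}^2(H)=\operatorname{conv}\{ss^T: s\in S(H)\}$. *)

theory Defs
  imports "HOL-Analysis.Analysis"
begin

definition simple_graph :: "nat \<Rightarrow> (nat \<Rightarrow> nat \<Rightarrow> bool) \<Rightarrow> bool" where
  "simple_graph n E \<longleftrightarrow> (\<forall>i j. E i j \<longrightarrow> E j i) \<and> (\<forall>i. \<not> E i i)
     \<and> (\<forall>i j. E i j \<longrightarrow> i \<in> {1..n} \<and> j \<in> {1..n})"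

definition induced_C5 :: "(nat \<Rightarrow> nat \<Rightarrow> bool) \<Rightarrow> nat set \<Rightarrow> bool" where
  "induced_C5 E I \<longleftrightarrow> (\<exists>f. bij_betw f {0..<5::nat} I \<and>
     (\<forall>a<5. \<forall>b<5. E (f a) (f b) \<longleftrightarrow> (b = (a + 1) mod 5 \<or> a = (b + 1) mod 5)))"

definition clique_in :: "(nat \<Rightarrow> nat \<Rightarrow> bool) \<Rightarrow> nat set \<Rightarrow> nat set \<Rightarrow> bool" where
  "clique_in E I C \<longleftrightarrow> C \<subseteq> I \<and> (\<forall>i\<in>C. \<forall>j\<in>C. i \<noteq> j \<longrightarrow> E i j)"

definition stab_vecs :: "(nat \<Rightarrow> nat \<Rightarrow> bool) \<Rightarrow> nat set \<Rightarrow> (nat \<Rightarrow> real) set" where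
  "stab_vecs E I = {s. (\<forall>i\<in>I. s i \<in> {0, 1}) \<and> (\<forall>i. i \<notin> I \<longrightarrow> s i = 0)
      \<and> (\<forall>i\<in>I. \<forall>j\<in>I. E i j \<longrightarrow> s i * s j = 0)}"

(* STAB^2(G_I) = conv { s s^T : s in S(G_I) }, matrices indexed by I x I,
   convex hull written out as the set of finite convex combinations *)
definition STAB2 :: "(nat \<Rightarrow> nat \<Rightarrow> bool) \<Rightarrow> nat set \<Rightarrow> (nat \<Rightarrow> nat \<Rightarrow> real) set" where
  "STAB2 E I = {X. \<exists>F c. finite F \<and> F \<subseteq> stab_vecs E I \<and> (\<forall>s\<in>F. c s \<ge> 0) \<and> sum c F = 1 \<and>
      (\<forall>i\<in>I. \<forall>j\<in>I. X i j = (\<Sum>s\<in>F. c s * (s i * s j)))}"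

end

theory Submission
  imports Defs
begin

text \<open>
  A stable set of the 5-cycle has at most two vertices, and two of them are nonadjacent; so every
  \<open>s s\<^sup>T\<close> with \<open>s\<close> stable satisfies the inequality, and by linearity so does every point of
  \<open>STAB\<^sup>2\<close>. Conversely, \<open>X\<close> is written explicitly as a convex combination of \<open>s s\<^sup>T\<close> over the
  eleven stable sets: a nonadjacent pair \<open>{i, j}\<close> gets weight \<open>X\<^sub>i\<^sub>j\<close>; a singleton \<open>{i}\<close> gets
  \<open>x\<^sub>i\<close> minus the two entries of row \<open>i\<close> at the vertices nonadjacent to \<open>i\<close>, which is
  nonnegative by condition (i) for the edge opposite \<open>i\<close>; the empty set gets the slack of the
  inequality.
\<close>

lemma STAB2_of_convex_combination:
  assumes "finite K" and "\<forall>k\<in>K. g k \<in> stab_vecs E I" and "\<forall>k\<in>K. w k \<ge> 0" and "(\<Sum>k\<in>K. w k) = 1"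
    and X: "\<forall>i\<in>I. \<forall>j\<in>I. X i j = (\<Sum>k\<in>K. w k * (g k i * g k j))"
  shows "X \<in> STAB2 E I"
proof -
  define c where "c s = (\<Sum>k\<in>{k\<in>K. g k = s}. w k)" for s
  have collect: "(\<Sum>s\<in>g ` K. c s * q s) = (\<Sum>k\<in>K. w k * q (g k))" for q :: "(nat \<Rightarrow> real) \<Rightarrow> real"
  proof -
    have "(\<Sum>k\<in>K. w k * q (g k)) = (\<Sum>s\<in>g ` K. \<Sum>k\<in>{k\<in>K. g k = s}. w k * q (g k))"
      using \<open>finite K\<close> by (rule sum.image_gen)
    also have "\<dots> = (\<Sum>s\<in>g ` K. c s * q s)"
      by (intro sum.cong refl) (simp add: c_def sum_distrib_right)
    finally show ?thesis ..
  qed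
  show ?thesis
    unfolding STAB2_def
  proof (intro CollectI exI conjI)
    show "finite (g ` K)" "g ` K \<subseteq> stab_vecs E I"
      using assms(1,2) by auto
    show "\<forall>s\<in>g ` K. c s \<ge> 0"
      using assms(3) by (auto simp: c_def intro!: sum_nonneg)
    show "sum c (g ` K) = 1"
      using collect[of "\<lambda>_. 1"] assms(4) by simp
    show "\<forall>i\<in>I. \<forall>j\<in>I. X i j = (\<Sum>s\<in>g ` K. c s * (s i * s j))"
      using collect X by simp
  qed
qed

lemma indicator_in_stab_vecs:
  assumes "S \<subseteq> I" and "\<forall>i\<in>S. \<forall>j\<in>S. \<not> E i j"
  shows "indicator S \<in> stab_vecs E I"
  using assms unfolding stab_vecs_def indicator_def by auto

lemma STAB2_of_weighted_stable_sets:
  assumes stable: "\<forall>(w, S)\<in>set L. w \<ge> 0 \<and> S \<subseteq> I \<and> (\<forall>i\<in>S. \<forall>j\<in>S. \<not> E i j)"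
    and total: "(\<Sum>(w, S)\<leftarrow>L. w) = 1"
    and X: "\<forall>i\<in>I. \<forall>j\<in>I. X i j = (\<Sum>(w, S)\<leftarrow>L. w * (indicator S i * indicator S j))"
  shows "X \<in> STAB2 E I"
proof (rule STAB2_of_convex_combination)
  let ?K = "{0..<length L}"
  have stable_nth: "fst (L ! k) \<ge> 0 \<and> snd (L ! k) \<subseteq> I \<and> (\<forall>i\<in>snd (L ! k). \<forall>j\<in>snd (L ! k). \<not> E i j)"
    if "k \<in> ?K" for k
    using bspec[OF stable nth_mem[of k L]] that by (simp add: case_prod_beta)
  show "finite ?K" by simp
  show "\<forall>k\<in>?K. indicator (snd (L ! k)) \<in> stab_vecs E I"
  proof
    fix k assume "k \<in> ?K"
    then show "indicator (snd (L ! k)) \<in> stab_vecs E I"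
      using stable_nth[OF \<open>k \<in> ?K\<close>] by (intro indicator_in_stab_vecs) auto
  qed
  show "\<forall>k\<in>?K. fst (L ! k) \<ge> 0"
    using stable_nth by blast
  show "(\<Sum>k\<in>?K. fst (L ! k)) = 1"
    using total by (simp add: sum_list_sum_nth case_prod_beta)
  show "\<forall>i\<in>I. \<forall>j\<in>I. X i j
      = (\<Sum>k\<in>?K. fst (L ! k) * (indicator (snd (L ! k)) i * indicator (snd (L ! k)) j))"
    using X by (simp add: sum_list_sum_nth case_prod_beta)
qed

lemma STAB2_valid_inequality:
  assumes "P \<subseteq> I \<times> I" and "X \<in> STAB2 E I"
    and valid: "\<forall>s\<in>stab_vecs E I. (\<Sum>i\<in>I. s i * s i) \<le> 1 + (\<Sum>(i, j)\<in>P. s i * s j)"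
  shows "(\<Sum>i\<in>I. X i i) \<le> 1 + (\<Sum>(i, j)\<in>P. X i j)"
proof -
  obtain F c where F: "finite F" "F \<subseteq> stab_vecs E I" "\<forall>s\<in>F. c s \<ge> 0" "sum c F = 1"
    and X: "\<forall>i\<in>I. \<forall>j\<in>I. X i j = (\<Sum>s\<in>F. c s * (s i * s j))"
    using \<open>X \<in> STAB2 E I\<close> unfolding STAB2_def by blast
  have "(\<Sum>i\<in>I. X i i) = (\<Sum>i\<in>I. \<Sum>s\<in>F. c s * (s i * s i))"
    using X by simp
  also have "\<dots> = (\<Sum>s\<in>F. c s * (\<Sum>i\<in>I. s i * s i))"
    by (subst sum.swap) (simp add: sum_distrib_left)
  also have "\<dots> \<le> (\<Sum>s\<in>F. c s * (1 + (\<Sum>(i, j)\<in>P. s i * s j)))"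
    using F valid by (intro sum_mono mult_left_mono) auto
  also have "\<dots> = 1 + (\<Sum>s\<in>F. \<Sum>(i, j)\<in>P. c s * (s i * s j))"
    using F(4) by (simp add: distrib_left sum.distrib sum_distrib_left case_prod_beta)
  also have "\<dots> = 1 + (\<Sum>(i, j)\<in>P. \<Sum>s\<in>F. c s * (s i * s j))"
    by (subst sum.swap) (simp add: case_prod_beta)
  also have "\<dots> = 1 + (\<Sum>(i, j)\<in>P. X i j)"
    using X \<open>P \<subseteq> I \<times> I\<close> by (intro arg_cong[where f = "(+) 1"] sum.cong) auto
  finally show ?thesis .
qed

lemma sum_less_pairs_doubled:
  fixes Y :: "'a :: linorder \<Rightarrow> 'a \<Rightarrow> real"
  assumes "finite I" and sym: "\<forall>i\<in>I. \<forall>j\<in>I. R i j = R j i \<and> Y i j = Y j i"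
  shows "2 * (\<Sum>(i, j)\<in>{(i, j). i \<in> I \<and> j \<in> I \<and> i < j \<and> R i j}. Y i j)
       = (\<Sum>i\<in>I. \<Sum>j\<in>I. if i \<noteq> j \<and> R i j then Y i j else 0)"
proof -
  let ?below = "\<lambda>i j. if i < j \<and> R i j then Y i j else 0"
  have "(\<Sum>(i, j)\<in>{(i, j). i \<in> I \<and> j \<in> I \<and> i < j \<and> R i j}. Y i j)
      = (\<Sum>(i, j)\<in>I \<times> I. ?below i j)"
    using \<open>finite I\<close> by (intro sum.mono_neutral_cong_left) (auto split: if_splits)
  also have "\<dots> = (\<Sum>i\<in>I. \<Sum>j\<in>I. ?below i j)"
    by (rule sum.cartesian_product[symmetric])
  finally have below: "(\<Sum>(i, j)\<in>{(i, j). i \<in> I \<and> j \<in> I \<and> i < j \<and> R i j}. Y i j)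
      = (\<Sum>i\<in>I. \<Sum>j\<in>I. ?below i j)" .
  have "(\<Sum>i\<in>I. \<Sum>j\<in>I. ?below i j) = (\<Sum>i\<in>I. \<Sum>j\<in>I. ?below j i)"
    by (subst sum.swap) (rule refl)
  also have "\<dots> = (\<Sum>i\<in>I. \<Sum>j\<in>I. if j < i \<and> R i j then Y i j else 0)"
    using sym by (intro sum.cong refl) auto
  finally have above: "(\<Sum>i\<in>I. \<Sum>j\<in>I. ?below i j)
      = (\<Sum>i\<in>I. \<Sum>j\<in>I. if j < i \<and> R i j then Y i j else 0)" .
  have "(\<Sum>i\<in>I. \<Sum>j\<in>I. if i \<noteq> j \<and> R i j then Y i j else 0)
      = (\<Sum>i\<in>I. \<Sum>j\<in>I. ?below i j + (if j < i \<and> R i j then Y i j else 0))"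
    by (intro sum.cong refl) auto
  then show ?thesis
    using below above by (simp add: sum.distrib)
qed

locale pentagon =
  fixes E :: "nat \<Rightarrow> nat \<Rightarrow> bool" and p :: "nat \<Rightarrow> nat"
  assumes p_inj: "inj_on p {0..<5}"
    and adjacent_iff: "a < 5 \<Longrightarrow> b < 5 \<Longrightarrow> E (p a) (p b) \<longleftrightarrow> b = (a + 1) mod 5 \<or> a = (b + 1) mod 5"
begin

abbreviation vertices :: "nat set" where
  "vertices \<equiv> p ` {0..<5}"

abbreviation nonadjacent_pairs :: "(nat \<times> nat) set" where
  "nonadjacent_pairs \<equiv> {(i, j). i \<in> vertices \<and> j \<in> vertices \<and> i < j \<and> \<not> E i j}"

lemma p_eq_iff [simp]: "a < 5 \<Longrightarrow> b < 5 \<Longrightarrow> p a = p b \<longleftrightarrow> a = b"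
  using p_inj by (simp add: inj_on_eq_iff)

lemma vertices_eq: "vertices = {p 0, p 1, p 2, p 3, p 4}"
proof -
  have "{0..<5::nat} = {0, 1, 2, 3, 4}" by auto
  then show ?thesis by simp
qed

lemma swap_on_vertices:
  assumes "\<forall>i\<in>vertices. \<forall>j\<in>vertices. Y i j = Y j i" and "a < 5" and "b < 5"
  shows "Y (p a) (p b) = Y (p b) (p a)"
proof -
  have "p a \<in> vertices" "p b \<in> vertices" using assms(2,3) by auto
  then show ?thesis using assms(1) by blast
qed

lemma sum_vertices: "(\<Sum>i\<in>vertices. h i) = h (p 0) + h (p 1) + h (p 2) + h (p 3) + h (p 4)"
  by (simp add: vertices_eq add.assoc)

lemma sum_nonadjacent_pairs:
  fixes Y :: "nat \<Rightarrow> nat \<Rightarrow> real"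
  assumes sym: "\<forall>i\<in>vertices. \<forall>j\<in>vertices. Y i j = Y j i"
  shows "(\<Sum>(i, j)\<in>nonadjacent_pairs. Y i j)
       = Y (p 0) (p 2) + Y (p 1) (p 3) + Y (p 2) (p 4) + Y (p 3) (p 0) + Y (p 4) (p 1)"
proof -
  have E_sym: "\<forall>i\<in>vertices. \<forall>j\<in>vertices. \<not> E i j \<longleftrightarrow> \<not> E j i"
    using adjacent_iff by auto
  have "2 * (\<Sum>(i, j)\<in>nonadjacent_pairs. Y i j)
      = (\<Sum>i\<in>vertices. \<Sum>j\<in>vertices. if i \<noteq> j \<and> \<not> E i j then Y i j else 0)"
    using E_sym sym by (intro sum_less_pairs_doubled) auto
  also have "\<dots> = 2 * (Y (p 0) (p 2) + Y (p 1) (p 3) + Y (p 2) (p 4) + Y (p 3) (p 0) + Y (p 4) (p 1))"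
    using swap_on_vertices[OF sym, of 2 0] swap_on_vertices[OF sym, of 3 1] swap_on_vertices[OF sym, of 4 2]
      swap_on_vertices[OF sym, of 0 3] swap_on_vertices[OF sym, of 1 4]
    by (simp add: sum_vertices adjacent_iff)
  finally show ?thesis by simp
qed

lemma stable_vec_inequality:
  assumes "s \<in> stab_vecs E vertices"
  shows "(\<Sum>i\<in>vertices. s i * s i) \<le> 1 + (\<Sum>(i, j)\<in>nonadjacent_pairs. s i * s j)"
proof -
  have binary: "s (p k) \<in> {0, 1}" if "k < 5" for k
    using assms that unfolding stab_vecs_def by auto
  have edge_zero: "s (p a) * s (p b) = 0" if "a < 5" "b < 5" "E (p a) (p b)" for a b
    using assms that unfolding stab_vecs_def by auto
  have "s (p 0) \<in> {0, 1} \<and> s (p 1) \<in> {0, 1} \<and> s (p 2) \<in> {0, 1} \<and> s (p 3) \<in> {0, 1} \<and> s (p 4) \<in> {0, 1}"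
    using binary[of 0] binary[of 1] binary[of 2] binary[of 3] binary[of 4] by simp
  moreover have "s (p 0) * s (p 1) = 0 \<and> s (p 1) * s (p 2) = 0 \<and> s (p 2) * s (p 3) = 0
      \<and> s (p 3) * s (p 4) = 0 \<and> s (p 4) * s (p 0) = 0"
    using edge_zero[of 0 1] edge_zero[of 1 2] edge_zero[of 2 3] edge_zero[of 3 4] edge_zero[of 4 0]
    by (simp add: adjacent_iff)
  ultimately have "s (p 0) * s (p 0) + s (p 1) * s (p 1) + s (p 2) * s (p 2) + s (p 3) * s (p 3) + s (p 4) * s (p 4)
      \<le> 1 + (s (p 0) * s (p 2) + s (p 1) * s (p 3) + s (p 2) * s (p 4) + s (p 3) * s (p 0) + s (p 4) * s (p 1))"
    by (simp only: insert_iff empty_iff simp_thms, elim conjE disjE) simp_all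
  moreover have "\<forall>i\<in>vertices. \<forall>j\<in>vertices. s i * s j = s j * s i"
    by (simp add: mult.commute)
  ultimately show ?thesis
    by (simp add: sum_vertices sum_nonadjacent_pairs mult.commute)
qed

lemma STAB2_if_inequality:
  fixes X :: "nat \<Rightarrow> nat \<Rightarrow> real"
  assumes sym: "\<forall>i\<in>vertices. \<forall>j\<in>vertices. X i j = X j i"
    and nonneg: "\<forall>i\<in>vertices. \<forall>j\<in>vertices. X i j \<ge> 0"
    and edge_zero: "\<forall>i\<in>vertices. \<forall>j\<in>vertices. E i j \<longrightarrow> X i j = 0"
    and edge_clique: "\<And>i j k. i \<in> vertices \<Longrightarrow> j \<in> vertices \<Longrightarrow> k \<in> vertices \<Longrightarrow> E i j
      \<Longrightarrow> k \<noteq> i \<Longrightarrow> k \<noteq> j \<Longrightarrow> X i k + X j k \<le> X k k"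
    and ineq: "(\<Sum>i\<in>vertices. X i i) \<le> 1 + (\<Sum>(i, j)\<in>nonadjacent_pairs. X i j)"
  shows "X \<in> STAB2 E vertices"
proof -
  note X_swap = swap_on_vertices[OF sym]
  have X_edge: "X (p a) (p b) = 0" if "a < 5" "b < 5" "E (p a) (p b)" for a b
    using edge_zero that by auto
  have clique_bound: "X (p a) (p c) + X (p b) (p c) \<le> X (p c) (p c)"
    if "a < 5" "b < 5" "c < 5" "E (p a) (p b)" "c \<noteq> a" "c \<noteq> b" for a b c
    using that by (intro edge_clique) auto
  have bounds:
    "X (p 0) (p 2) + X (p 3) (p 0) \<le> X (p 0) (p 0)" "X (p 1) (p 3) + X (p 4) (p 1) \<le> X (p 1) (p 1)"
    "X (p 2) (p 4) + X (p 0) (p 2) \<le> X (p 2) (p 2)" "X (p 3) (p 0) + X (p 1) (p 3) \<le> X (p 3) (p 3)"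
    "X (p 4) (p 1) + X (p 2) (p 4) \<le> X (p 4) (p 4)"
    using clique_bound[of 2 3 0] clique_bound[of 3 4 1] clique_bound[of 4 0 2] clique_bound[of 0 1 3]
      clique_bound[of 1 2 4] X_swap[of 2 0] X_swap[of 3 1] X_swap[of 4 2] X_swap[of 0 3] X_swap[of 1 4]
    by (simp_all add: adjacent_iff)
  define L where "L =
    [(1 + (\<Sum>(i, j)\<in>nonadjacent_pairs. X i j) - (\<Sum>i\<in>vertices. X i i), {}),
     (X (p 0) (p 0) - X (p 0) (p 2) - X (p 3) (p 0), {p 0}),
     (X (p 1) (p 1) - X (p 1) (p 3) - X (p 4) (p 1), {p 1}),
     (X (p 2) (p 2) - X (p 2) (p 4) - X (p 0) (p 2), {p 2}),
     (X (p 3) (p 3) - X (p 3) (p 0) - X (p 1) (p 3), {p 3}),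
     (X (p 4) (p 4) - X (p 4) (p 1) - X (p 2) (p 4), {p 4}),
     (X (p 0) (p 2), {p 0, p 2}), (X (p 1) (p 3), {p 1, p 3}), (X (p 2) (p 4), {p 2, p 4}),
     (X (p 3) (p 0), {p 3, p 0}), (X (p 4) (p 1), {p 4, p 1})]"
  show ?thesis
  proof (rule STAB2_of_weighted_stable_sets)
    show "\<forall>(w, S)\<in>set L. 0 \<le> w \<and> S \<subseteq> vertices \<and> (\<forall>i\<in>S. \<forall>j\<in>S. \<not> E i j)"
      using ineq bounds nonneg by (simp add: L_def vertices_eq adjacent_iff)
    show "(\<Sum>(w, S)\<leftarrow>L. w) = 1"
      by (simp add: L_def sum_vertices sum_nonadjacent_pairs[OF sym])
    show "\<forall>i\<in>vertices. \<forall>j\<in>vertices. X i j = (\<Sum>(w, S)\<leftarrow>L. w * (indicator S i * indicator S j))"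
    proof (intro ballI)
      fix i j assume "i \<in> vertices" "j \<in> vertices"
      then show "X i j = (\<Sum>(w, S)\<leftarrow>L. w * (indicator S i * indicator S j))"
        unfolding vertices_eq
        using X_swap[of 2 0] X_swap[of 3 1] X_swap[of 4 2] X_swap[of 0 3] X_swap[of 1 4]
        by (auto simp: L_def sum_vertices sum_nonadjacent_pairs[OF sym] X_edge adjacent_iff)
    qed
  qed
qed

lemma STAB2_iff_inequality:
  fixes X :: "nat \<Rightarrow> nat \<Rightarrow> real"
  assumes "\<forall>i\<in>vertices. \<forall>j\<in>vertices. X i j = X j i"
    and "\<forall>i\<in>vertices. \<forall>j\<in>vertices. X i j \<ge> 0"
    and "\<forall>i\<in>vertices. \<forall>j\<in>vertices. E i j \<longrightarrow> X i j = 0"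
    and "\<And>i j k. i \<in> vertices \<Longrightarrow> j \<in> vertices \<Longrightarrow> k \<in> vertices \<Longrightarrow> E i j
      \<Longrightarrow> k \<noteq> i \<Longrightarrow> k \<noteq> j \<Longrightarrow> X i k + X j k \<le> X k k"
  shows "X \<in> STAB2 E vertices \<longleftrightarrow>
    (\<Sum>i\<in>vertices. X i i) \<le> 1 + (\<Sum>(i, j)\<in>nonadjacent_pairs. X i j)"
proof
  show "(\<Sum>i\<in>vertices. X i i) \<le> 1 + (\<Sum>(i, j)\<in>nonadjacent_pairs. X i j)"
    if "X \<in> STAB2 E vertices"
    using that stable_vec_inequality by (intro STAB2_valid_inequality) auto
  show "X \<in> STAB2 E vertices"
    if "(\<Sum>i\<in>vertices. X i i) \<le> 1 + (\<Sum>(i, j)\<in>nonadjacent_pairs. X i j)"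
    using assms that by (rule STAB2_if_inequality)
qed

end

lemma edge_clique_bound:
  assumes "simple_graph n E"
    and cond_i: "\<forall>C1 j. clique_in E I C1 \<and> C1 \<noteq> {} \<and> j \<in> I - C1 \<longrightarrow> (\<Sum>i\<in>C1. X i j) \<le> X j j"
    and "i \<in> I" "j \<in> I" "k \<in> I" "E i j" "k \<noteq> i" "k \<noteq> j"
  shows "X i k + X j k \<le> X k k"
proof -
  have "E j i" "i \<noteq> j"
    using assms(1) \<open>E i j\<close> unfolding simple_graph_def by auto
  then have "clique_in E I {i, j}"
    using assms(3,4,6) unfolding clique_in_def by auto
  then have "(\<Sum>i'\<in>{i, j}. X i' k) \<le> X k k"
    using cond_i assms(5-8) by blast
  then show ?thesis
    using \<open>i \<noteq> j\<close> by simp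
qed

theorem lemmaL6:
  fixes n :: nat and E :: "nat \<Rightarrow> nat \<Rightarrow> bool" and I :: "nat set"
    and X :: "nat \<Rightarrow> nat \<Rightarrow> real"
  assumes G: "simple_graph n E"
    and I: "I \<subseteq> {1..n}" "card I = 5" "induced_C5 E I"
    and sym: "\<forall>i\<in>I. \<forall>j\<in>I. X i j = X j i"
    and psd: "\<forall>v :: nat \<Rightarrow> real. (\<Sum>i\<in>I. \<Sum>j\<in>I. v i * X i j * v j) \<ge> 0"
    and nonneg: "\<forall>i\<in>I. \<forall>j\<in>I. X i j \<ge> 0"
    and edge0: "\<forall>i\<in>I. \<forall>j\<in>I. E i j \<longrightarrow> X i j = 0"
    and cond_i: "\<forall>C1 j. clique_in E I C1 \<and> C1 \<noteq> {} \<and> j \<in> I - C1 \<longrightarrow>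
                   (\<Sum>i\<in>C1. X i j) \<le> X j j"
    and cond_ii: "\<forall>C1 C2. clique_in E I C1 \<and> clique_in E I C2 \<and> C1 \<noteq> {} \<and> C2 \<noteq> {}
                   \<and> C1 \<inter> C2 = {} \<longrightarrow>
                   (\<Sum>i\<in>C1 \<union> C2. X i i) \<le> 1 + (\<Sum>i\<in>C1. \<Sum>j\<in>C2. X i j)"
  shows "X \<in> STAB2 E I \<longleftrightarrow>
           (\<Sum>i\<in>I. X i i) \<le> 1 + (\<Sum>(i, j)\<in>{(i, j). i \<in> I \<and> j \<in> I \<and> i < j \<and> \<not> E i j}. X i j)"
proof -
  obtain f :: "nat \<Rightarrow> nat" where f: "bij_betw f {0..<5} I"
    and adjacent: "\<forall>a<5. \<forall>b<5. E (f a) (f b) \<longleftrightarrow> (b = (a + 1) mod 5 \<or> a = (b + 1) mod 5)"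
    using I(3) unfolding induced_C5_def by blast
  interpret pentagon E f
    using f adjacent by unfold_locales (auto simp: bij_betw_def)
  have "I = f ` {0..<5}"
    using f by (simp add: bij_betw_def)
  then show ?thesis
    using STAB2_iff_inequality[of X] sym nonneg edge0 edge_clique_bound[OF G cond_i] by simp
qed

end
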